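(* The functor $G:\mathbf{cMet}_1\to\mathrm{ER}(\mathbf U)$, $G(X,d)=(X,d)$, $G(f)=[(x,y)\mapsto d(f(x),y)]$, is an equivalence of categories.
   Context: $\mathbf{cMet}_1$: complete metric spaces with all distances $\le 1$ and uniformly continuous maps. For functions $\alpha,\beta:Z\to[0,1]$ write $\alpha\sqsubseteq\beta$ if for every $\varepsilon>0$ there exists $\delta>0$ such that for all $z\in Z$, $\alpha(z)\le\delta$ implies $\beta(z)\le\varepsilon$. The category $\mathrm{ER}(\mathbf U)$: objects are pairs $(X,R)$ with $X$ a set and $R:X\times X\to[0,1]$ such that $R(x,x)=0$ for all $x$, $R(x,y)\sqsubseteq R(y,x)$ as functions of $(x,y)$, and $\max(R(x,y),R(y,z))\sqsubseteq R(x,z)$ as functions of $(x,y,z)$. A functional relation $(X,R)\to(Y,S)$ is a function $F:X\times Y\to[0,1]$ with $\max(F(x,y),R(x,x'),S(y,y'))\sqsubseteq F(x',y')$ as functions of $(x,x',y,y')$, $\max(F(x,y),F(x,y'))\sqsubseteq S(y,y')$ as functions of $(x,y,y')$, and $\inf_{y\in Y}F(x,y)=0$ for all $x$. Morphisms are equivalence classes $[F]$ of functional relations, with $F\sim F'$ iff $F\sqsubseteq F'$ as functions on $X\times Y$; identity $[R]$; composite of $[F]$ and $[H]$ is $[(x,z)\mapsto\inf_y\max(F(x,y),H(y,z))]$. *)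

theory Defs
  imports "HOL-Analysis.Analysis"
begin

definition cMet1_obj :: "'u set \<Rightarrow> ('u \<Rightarrow> 'u \<Rightarrow> real) \<Rightarrow> bool" where
  "cMet1_obj X d \<longleftrightarrow> Metric_space X d \<and> Metric_space.mcomplete X d
      \<and> (\<forall>x\<in>X. \<forall>y\<in>X. d x y \<le> 1)"

text \<open>Morphisms: uniformly continuous maps; two morphisms are equal iff they agree on X.\<close>
definition cMet1_hom ::
  "'u set \<Rightarrow> ('u \<Rightarrow> 'u \<Rightarrow> real) \<Rightarrow> 'u set \<Rightarrow> ('u \<Rightarrow> 'u \<Rightarrow> real) \<Rightarrow> ('u \<Rightarrow> 'u) \<Rightarrow> bool" where
  "cMet1_hom X d Y e f \<longleftrightarrow> uniformly_continuous_map (metric (X,d)) (metric (Y,e)) f"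

definition sqle :: "'z set \<Rightarrow> ('z \<Rightarrow> real) \<Rightarrow> ('z \<Rightarrow> real) \<Rightarrow> bool" where
  "sqle Z \<alpha> \<beta> \<longleftrightarrow> (\<forall>\<epsilon>>0. \<exists>\<delta>>0. \<forall>z\<in>Z. \<alpha> z \<le> \<delta> \<longrightarrow> \<beta> z \<le> \<epsilon>)"

definition ER_obj :: "'u set \<Rightarrow> ('u \<Rightarrow> 'u \<Rightarrow> real) \<Rightarrow> bool" where
  "ER_obj X R \<longleftrightarrow>
     (\<forall>x\<in>X. \<forall>y\<in>X. 0 \<le> R x y \<and> R x y \<le> 1)
   \<and> (\<forall>x\<in>X. R x x = 0)
   \<and> sqle (X \<times> X) (\<lambda>(x,y). R x y) (\<lambda>(x,y). R y x)
   \<and> sqle (X \<times> X \<times> X) (\<lambda>(x,y,z). max (R x y) (R y z)) (\<lambda>(x,y,z). R x z)"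

text \<open>Functional relations (X,R) \<rightarrow> (Y,S). The condition inf_y F(x,y) = 0 is written out
  (F takes values in [0,1]).\<close>
definition func_rel ::
  "'u set \<Rightarrow> ('u \<Rightarrow> 'u \<Rightarrow> real) \<Rightarrow> 'u set \<Rightarrow> ('u \<Rightarrow> 'u \<Rightarrow> real) \<Rightarrow> ('u \<Rightarrow> 'u \<Rightarrow> real) \<Rightarrow> bool" where
  "func_rel X R Y S F \<longleftrightarrow>
     (\<forall>x\<in>X. \<forall>y\<in>Y. 0 \<le> F x y \<and> F x y \<le> 1)
   \<and> sqle (X \<times> X \<times> Y \<times> Y) (\<lambda>(x,x',y,y'). max (F x y) (max (R x x') (S y y')))
                            (\<lambda>(x,x',y,y'). F x' y')
   \<and> sqle (X \<times> Y \<times> Y) (\<lambda>(x,y,y'). max (F x y) (F x y')) (\<lambda>(x,y,y'). S y y')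
   \<and> (\<forall>x\<in>X. \<forall>\<epsilon>>0. \<exists>y\<in>Y. F x y < \<epsilon>)"

text \<open>Equality of morphisms [F] = [F'] in ER(U): F \<sqsubseteq> F' on X \<times> Y.\<close>
definition ER_eq ::
  "'u set \<Rightarrow> 'u set \<Rightarrow> ('u \<Rightarrow> 'u \<Rightarrow> real) \<Rightarrow> ('u \<Rightarrow> 'u \<Rightarrow> real) \<Rightarrow> bool" where
  "ER_eq X Y F F' \<longleftrightarrow> sqle (X \<times> Y) (\<lambda>(x,y). F x y) (\<lambda>(x,y). F' x y)"

definition ER_comp ::
  "'u set \<Rightarrow> ('u \<Rightarrow> 'u \<Rightarrow> real) \<Rightarrow> ('u \<Rightarrow> 'u \<Rightarrow> real) \<Rightarrow> ('u \<Rightarrow> 'u \<Rightarrow> real)" where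
  "ER_comp Y F H = (\<lambda>x z. INF y\<in>Y. max (F x y) (H y z))"

definition G_hom :: "('u \<Rightarrow> 'u \<Rightarrow> real) \<Rightarrow> ('u \<Rightarrow> 'u) \<Rightarrow> ('u \<Rightarrow> 'u \<Rightarrow> real)" where
  "G_hom e f = (\<lambda>x y. e (f x) y)"

text \<open>G is a well-defined functor cMet_1 \<rightarrow> ER(U) (on objects G(X,d) = (X,d)).\<close>
definition G_is_functor :: "'u itself \<Rightarrow> bool" where
  "G_is_functor _ \<longleftrightarrow>
     (\<forall>(X::'u set) d. cMet1_obj X d \<longrightarrow> ER_obj X d)
   \<and> (\<forall>(X::'u set) d Y e f. cMet1_obj X d \<longrightarrow> cMet1_obj Y e \<longrightarrow> cMet1_hom X d Y e f
        \<longrightarrow> func_rel X d Y e (G_hom e f))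
   \<and> (\<forall>(X::'u set) d. cMet1_obj X d \<longrightarrow> ER_eq X X (G_hom d id) d)
   \<and> (\<forall>(X::'u set) d Y e Z c f g. cMet1_obj X d \<longrightarrow> cMet1_obj Y e \<longrightarrow> cMet1_obj Z c
        \<longrightarrow> cMet1_hom X d Y e f \<longrightarrow> cMet1_hom Y e Z c g
        \<longrightarrow> ER_eq X Z (G_hom c (g \<circ> f)) (ER_comp Y (G_hom e f) (G_hom c g)))"

definition G_faithful :: "'u itself \<Rightarrow> bool" where
  "G_faithful _ \<longleftrightarrow>
     (\<forall>(X::'u set) d Y e f g. cMet1_obj X d \<longrightarrow> cMet1_obj Y e
        \<longrightarrow> cMet1_hom X d Y e f \<longrightarrow> cMet1_hom X d Y e g
        \<longrightarrow> ER_eq X Y (G_hom e f) (G_hom e g) \<longrightarrow> (\<forall>x\<in>X. f x = g x))"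

definition G_full :: "'u itself \<Rightarrow> bool" where
  "G_full _ \<longleftrightarrow>
     (\<forall>(X::'u set) d Y e F. cMet1_obj X d \<longrightarrow> cMet1_obj Y e \<longrightarrow> func_rel X d Y e F
        \<longrightarrow> (\<exists>f. cMet1_hom X d Y e f \<and> ER_eq X Y F (G_hom e f)))"

definition G_ess_surj :: "'u itself \<Rightarrow> bool" where
  "G_ess_surj _ \<longleftrightarrow>
     (\<forall>(X::'u set) R. ER_obj X R \<longrightarrow>
        (\<exists>(Y::'u set) e F H. cMet1_obj Y e \<and> func_rel X R Y e F \<and> func_rel Y e X R H
           \<and> ER_eq X X (ER_comp Y F H) R \<and> ER_eq Y Y (ER_comp X H F) e))"

definition G_equivalence :: "'u itself \<Rightarrow> bool" where
  "G_equivalence u \<longleftrightarrow> G_is_functor u \<and> G_full u \<and> G_faithful u \<and> G_ess_surj u"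

end

theory Submission
  imports Defs
begin

text \<open>Functoriality, faithfulness and fullness are \<open>\<epsilon>\<close>-\<open>\<delta>\<close> arguments; for fullness, a
  functional relation \<open>F\<close> into a complete space determines \<open>f x\<close> as the limit of any sequence
  \<open>y\<^sub>n\<close> with \<open>F x y\<^sub>n \<rightarrow> 0\<close>, which is Cauchy because \<open>F\<close> is single-valued.

  For essential surjectivity, the conditions on an object \<open>(X, R)\<close> of \<open>ER(U)\<close> say that the
  sets \<open>{R \<le> \<delta>}\<close> form a countable base of a uniformity, so Frink's chain construction gives a
  pseudometric \<open>d\<close> with \<open>R \<sqsubseteq> d \<sqsubseteq> R\<close>. The completion \<open>(Y, e)\<close> of \<open>(X, d)\<close>, with dense
  isometric map \<open>\<iota>\<close>, is isomorphic to \<open>(X, R)\<close> via the relations \<open>e (\<iota> x) y\<close> and \<open>e y (\<iota> x)\<close>.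
  The completion must live in the universe \<open>'u\<close> itself: its points are coded by approximating
  sequences in \<open>X\<close>, which is where the injection \<open>(nat \<Rightarrow> 'u) \<Rightarrow> 'u\<close> is used.\<close>

lemma ER_obj_iff:
  "ER_obj X R \<longleftrightarrow> (\<forall>x\<in>X. \<forall>y\<in>X. 0 \<le> R x y \<and> R x y \<le> 1) \<and> (\<forall>x\<in>X. R x x = 0)
    \<and> (\<forall>\<epsilon>>0. \<exists>\<delta>>0. \<forall>x\<in>X. \<forall>y\<in>X. R x y \<le> \<delta> \<longrightarrow> R y x \<le> \<epsilon>)
    \<and> (\<forall>\<epsilon>>0. \<exists>\<delta>>0. \<forall>x\<in>X. \<forall>y\<in>X. \<forall>z\<in>X. R x y \<le> \<delta> \<and> R y z \<le> \<delta> \<longrightarrow> R x z \<le> \<epsilon>)"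
  by (simp add: ER_obj_def sqle_def)

lemma func_rel_iff:
  "func_rel X R Y S F \<longleftrightarrow> (\<forall>x\<in>X. \<forall>y\<in>Y. 0 \<le> F x y \<and> F x y \<le> 1)
    \<and> (\<forall>\<epsilon>>0. \<exists>\<delta>>0. \<forall>x\<in>X. \<forall>x'\<in>X. \<forall>y\<in>Y. \<forall>y'\<in>Y.
          F x y \<le> \<delta> \<and> R x x' \<le> \<delta> \<and> S y y' \<le> \<delta> \<longrightarrow> F x' y' \<le> \<epsilon>)
    \<and> (\<forall>\<epsilon>>0. \<exists>\<delta>>0. \<forall>x\<in>X. \<forall>y\<in>Y. \<forall>y'\<in>Y. F x y \<le> \<delta> \<and> F x y' \<le> \<delta> \<longrightarrow> S y y' \<le> \<epsilon>)
    \<and> (\<forall>x\<in>X. \<forall>\<epsilon>>0. \<exists>y\<in>Y. F x y < \<epsilon>)"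
  by (simp add: func_rel_def sqle_def)

lemma func_rel_totalD: "func_rel X R Y S F \<Longrightarrow> x \<in> X \<Longrightarrow> \<epsilon> > 0 \<Longrightarrow> \<exists>y\<in>Y. F x y < \<epsilon>"
  by (simp add: func_rel_iff)

lemma func_rel_extensionalE:
  assumes "func_rel X R Y S F" "\<epsilon> > 0"
  obtains \<delta> where "\<delta> > 0" "\<And>x x' y y'. x \<in> X \<Longrightarrow> x' \<in> X \<Longrightarrow> y \<in> Y \<Longrightarrow> y' \<in> Y \<Longrightarrow>
      F x y \<le> \<delta> \<Longrightarrow> R x x' \<le> \<delta> \<Longrightarrow> S y y' \<le> \<delta> \<Longrightarrow> F x' y' \<le> \<epsilon>"
proof -
  have "\<exists>\<delta>>0. \<forall>x\<in>X. \<forall>x'\<in>X. \<forall>y\<in>Y. \<forall>y'\<in>Y.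
      F x y \<le> \<delta> \<and> R x x' \<le> \<delta> \<and> S y y' \<le> \<delta> \<longrightarrow> F x' y' \<le> \<epsilon>"
    using assms by (simp add: func_rel_iff)
  then show thesis
    using that by blast
qed

lemma func_rel_single_valuedE:
  assumes "func_rel X R Y S F" "\<epsilon> > 0"
  obtains \<delta> where "\<delta> > 0" "\<And>x y y'. x \<in> X \<Longrightarrow> y \<in> Y \<Longrightarrow> y' \<in> Y \<Longrightarrow>
      F x y \<le> \<delta> \<Longrightarrow> F x y' \<le> \<delta> \<Longrightarrow> S y y' \<le> \<epsilon>"
proof -
  have "\<exists>\<delta>>0. \<forall>x\<in>X. \<forall>y\<in>Y. \<forall>y'\<in>Y. F x y \<le> \<delta> \<and> F x y' \<le> \<delta> \<longrightarrow> S y y' \<le> \<epsilon>"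
    using assms by (simp add: func_rel_iff)
  then show thesis
    using that by blast
qed

lemma ER_eq_iff:
  "ER_eq X Y F F' \<longleftrightarrow> (\<forall>\<epsilon>>0. \<exists>\<delta>>0. \<forall>x\<in>X. \<forall>y\<in>Y. F x y \<le> \<delta> \<longrightarrow> F' x y \<le> \<epsilon>)"
  by (simp add: ER_eq_def sqle_def)

lemma ER_eqE:
  assumes "ER_eq X Y F F'" "\<epsilon> > 0"
  obtains \<delta> where "\<delta> > 0" "\<And>x y. x \<in> X \<Longrightarrow> y \<in> Y \<Longrightarrow> F x y \<le> \<delta> \<Longrightarrow> F' x y \<le> \<epsilon>"
  using assms by (auto simp: ER_eq_iff)

lemma ER_eq_cong:
  assumes "ER_eq X Y F F'" "\<And>x y. x \<in> X \<Longrightarrow> y \<in> Y \<Longrightarrow> G x y = F x y"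
    "\<And>x y. x \<in> X \<Longrightarrow> y \<in> Y \<Longrightarrow> G' x y = F' x y"
  shows "ER_eq X Y G G'"
  using assms by (simp add: ER_eq_iff)

lemma ER_eq_if_le:
  assumes "\<And>x y. x \<in> X \<Longrightarrow> y \<in> Y \<Longrightarrow> F' x y \<le> F x y"
  shows "ER_eq X Y F F'"
  unfolding ER_eq_iff
proof (intro allI impI)
  fix \<epsilon> :: real assume "\<epsilon> > 0"
  then show "\<exists>\<delta>>0. \<forall>x\<in>X. \<forall>y\<in>Y. F x y \<le> \<delta> \<longrightarrow> F' x y \<le> \<epsilon>"
    using assms order_trans by blast
qed

lemma ER_eq_trans:
  assumes "ER_eq X Y A B" "ER_eq X Y B C"
  shows "ER_eq X Y A C"
  unfolding ER_eq_iff
proof (intro allI impI)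
  fix \<epsilon> :: real assume "\<epsilon> > 0"
  obtain \<eta> where "\<eta> > 0" and \<eta>: "\<And>x y. x \<in> X \<Longrightarrow> y \<in> Y \<Longrightarrow> B x y \<le> \<eta> \<Longrightarrow> C x y \<le> \<epsilon>"
    using ER_eqE[OF assms(2) \<open>\<epsilon> > 0\<close>] by blast
  obtain \<delta> where "\<delta> > 0" and \<delta>: "\<And>x y. x \<in> X \<Longrightarrow> y \<in> Y \<Longrightarrow> A x y \<le> \<delta> \<Longrightarrow> B x y \<le> \<eta>"
    using ER_eqE[OF assms(1) \<open>\<eta> > 0\<close>] by blast
  from \<open>\<delta> > 0\<close> \<eta> \<delta> show "\<exists>\<delta>>0. \<forall>x\<in>X. \<forall>y\<in>Y. A x y \<le> \<delta> \<longrightarrow> C x y \<le> \<epsilon>"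
    by blast
qed

lemma ER_comp_le:
  assumes "y \<in> Y" "\<forall>y\<in>Y. 0 \<le> F x y"
  shows "ER_comp Y F H x z \<le> max (F x y) (H y z)"
  unfolding ER_comp_def
  by (rule cINF_lower) (use assms in \<open>auto intro!: bdd_belowI[of _ 0] simp: le_max_iff_disj\<close>)

lemma ER_comp_less_iff:
  assumes "Y \<noteq> {}" "\<forall>y\<in>Y. 0 \<le> F x y"
  shows "ER_comp Y F H x z < t \<longleftrightarrow> (\<exists>y\<in>Y. max (F x y) (H y z) < t)"
  unfolding ER_comp_def
  by (rule cINF_less_iff) (use assms in \<open>auto intro!: bdd_belowI[of _ 0] simp: le_max_iff_disj\<close>)

locale pseudometric =
  fixes X :: "'a set" and d :: "'a \<Rightarrow> 'a \<Rightarrow> real"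
  assumes self [simp]: "x \<in> X \<Longrightarrow> d x x = 0"
    and commute: "x \<in> X \<Longrightarrow> y \<in> X \<Longrightarrow> d x y = d y x"
    and triangle: "x \<in> X \<Longrightarrow> y \<in> X \<Longrightarrow> z \<in> X \<Longrightarrow> d x z \<le> d x y + d y z"
begin

lemma nonneg: "x \<in> X \<Longrightarrow> y \<in> X \<Longrightarrow> 0 \<le> d x y"
  using triangle[of x y x] commute[of x y] by simp

lemma triangle3:
  "w \<in> X \<Longrightarrow> x \<in> X \<Longrightarrow> y \<in> X \<Longrightarrow> z \<in> X \<Longrightarrow> d w z \<le> d w x + d x y + d y z"
  using triangle[of w x z] triangle[of x y z] by simp

end

lemma pseudometric_if_Metric_space: "Metric_space X d \<Longrightarrow> pseudometric X d"
  by (simp add: pseudometric_def Metric_space.commute Metric_space.triangle Metric_space.mdist_zero)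

lemma cMet1_objD:
  assumes "cMet1_obj X d"
  shows "Metric_space X d" "Metric_space.mcomplete X d" "pseudometric X d"
    "\<forall>x\<in>X. \<forall>y\<in>X. d x y \<le> 1"
  using assms pseudometric_if_Metric_space by (auto simp: cMet1_obj_def)

lemma uniformly_continuous_map_iff_ER_eq:
  assumes "Metric_space X d" "Metric_space Y e"
  shows "uniformly_continuous_map (metric (X, d)) (metric (Y, e)) f
     \<longleftrightarrow> f \<in> X \<rightarrow> Y \<and> ER_eq X X d (\<lambda>x x'. e (f x) (f x'))"
proof -
  have "(\<forall>\<epsilon>>0. \<exists>\<delta>>0. \<forall>x'\<in>X. \<forall>x\<in>X. d x x' < \<delta> \<longrightarrow> e (f x) (f x') < \<epsilon>)
     \<longleftrightarrow> ER_eq X X d (\<lambda>x x'. e (f x) (f x'))" (is "?strict \<longleftrightarrow> _")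
  proof
    assume ?strict
    show "ER_eq X X d (\<lambda>x x'. e (f x) (f x'))"
      unfolding ER_eq_iff
    proof (intro allI impI)
      fix \<epsilon> :: real assume "\<epsilon> > 0"
      with \<open>?strict\<close> obtain \<delta> where "\<delta> > 0" "\<forall>x'\<in>X. \<forall>x\<in>X. d x x' < \<delta> \<longrightarrow> e (f x) (f x') < \<epsilon>"
        by blast
      then show "\<exists>\<delta>>0. \<forall>x\<in>X. \<forall>x'\<in>X. d x x' \<le> \<delta> \<longrightarrow> e (f x) (f x') \<le> \<epsilon>"
        by (intro exI[of _ "\<delta>/2"]) force
    qed
  next
    assume uc: "ER_eq X X d (\<lambda>x x'. e (f x) (f x'))"
    show ?strict
    proof (intro allI impI)
      fix \<epsilon> :: real assume "\<epsilon> > 0"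
      then obtain \<delta> where "\<delta> > 0" "\<And>x x'. x \<in> X \<Longrightarrow> x' \<in> X \<Longrightarrow> d x x' \<le> \<delta> \<Longrightarrow> e (f x) (f x') \<le> \<epsilon>/2"
        using ER_eqE[OF uc, of "\<epsilon>/2"] by auto
      with \<open>\<epsilon> > 0\<close> show "\<exists>\<delta>>0. \<forall>x'\<in>X. \<forall>x\<in>X. d x x' < \<delta> \<longrightarrow> e (f x) (f x') < \<epsilon>"
        by (intro exI[of _ \<delta>]) force
    qed
  qed
  then show ?thesis
    using assms by (simp add: uniformly_continuous_map_def Metric_space.mspace_metric
        Metric_space.mdist_metric)
qed

lemma cMet1_hom_iff:
  assumes "cMet1_obj X d" "cMet1_obj Y e"
  shows "cMet1_hom X d Y e f \<longleftrightarrow> f \<in> X \<rightarrow> Y \<and> ER_eq X X d (\<lambda>x x'. e (f x) (f x'))"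
  using assms by (simp add: cMet1_hom_def cMet1_obj_def uniformly_continuous_map_iff_ER_eq)

section \<open>Functoriality and faithfulness\<close>

lemma ER_obj_if_pseudometric:
  assumes "pseudometric X d" "\<forall>x\<in>X. \<forall>y\<in>X. d x y \<le> 1"
  shows "ER_obj X d"
proof -
  interpret pseudometric X d by fact
  have "\<exists>\<delta>>0. \<forall>x\<in>X. \<forall>y\<in>X. d x y \<le> \<delta> \<longrightarrow> d y x \<le> \<epsilon>" if "\<epsilon> > 0" for \<epsilon>
    using that commute by (intro exI[of _ \<epsilon>]) auto
  moreover have "\<exists>\<delta>>0. \<forall>x\<in>X. \<forall>y\<in>X. \<forall>z\<in>X. d x y \<le> \<delta> \<and> d y z \<le> \<delta> \<longrightarrow> d x z \<le> \<epsilon>"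
    if "\<epsilon> > 0" for \<epsilon>
  proof (intro exI[of _ "\<epsilon>/2"] conjI ballI impI)
    fix x y z assume "x \<in> X" "y \<in> X" "z \<in> X" "d x y \<le> \<epsilon>/2 \<and> d y z \<le> \<epsilon>/2"
    then show "d x z \<le> \<epsilon>"
      using triangle[of x y z] by simp
  qed (use that in simp)
  ultimately show ?thesis
    using assms(2) nonneg by (simp add: ER_obj_iff)
qed

lemma func_rel_G_hom:
  assumes Y: "pseudometric Y e" "\<forall>y\<in>Y. \<forall>y'\<in>Y. e y y' \<le> 1"
    and f: "f \<in> X \<rightarrow> Y" and uc: "ER_eq X X R (\<lambda>x x'. e (f x) (f x'))"
  shows "func_rel X R Y e (G_hom e f)"
proof -
  interpret Y: pseudometric Y e by fact
  have "\<exists>\<delta>>0. \<forall>x\<in>X. \<forall>x'\<in>X. \<forall>y\<in>Y. \<forall>y'\<in>Y.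
          e (f x) y \<le> \<delta> \<and> R x x' \<le> \<delta> \<and> e y y' \<le> \<delta> \<longrightarrow> e (f x') y' \<le> \<epsilon>" if "\<epsilon> > 0" for \<epsilon>
  proof -
    obtain \<delta> where "\<delta> > 0"
      and \<delta>: "\<And>x x'. x \<in> X \<Longrightarrow> x' \<in> X \<Longrightarrow> R x x' \<le> \<delta> \<Longrightarrow> e (f x) (f x') \<le> \<epsilon>/3"
      using ER_eqE[OF uc, of "\<epsilon>/3"] \<open>\<epsilon> > 0\<close> by auto
    show ?thesis
    proof (intro exI[of _ "min \<delta> (\<epsilon>/3)"] conjI ballI impI)
      fix x x' y y' assume "x \<in> X" "x' \<in> X" "y \<in> Y" "y' \<in> Y"
        and small: "e (f x) y \<le> min \<delta> (\<epsilon>/3) \<and> R x x' \<le> min \<delta> (\<epsilon>/3) \<and> e y y' \<le> min \<delta> (\<epsilon>/3)"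
      then have "f x \<in> Y" "f x' \<in> Y" "e (f x) (f x') \<le> \<epsilon>/3"
        using f \<delta> by auto
      then show "e (f x') y' \<le> \<epsilon>"
        using Y.triangle3[of "f x'" "f x" y y'] Y.commute[of "f x" "f x'"] small \<open>y \<in> Y\<close> \<open>y' \<in> Y\<close>
        by simp
    qed (use \<open>\<delta> > 0\<close> \<open>\<epsilon> > 0\<close> in simp)
  qed
  moreover have "\<exists>\<delta>>0. \<forall>x\<in>X. \<forall>y\<in>Y. \<forall>y'\<in>Y. e (f x) y \<le> \<delta> \<and> e (f x) y' \<le> \<delta> \<longrightarrow> e y y' \<le> \<epsilon>"
    if "\<epsilon> > 0" for \<epsilon>
  proof (intro exI[of _ "\<epsilon>/2"] conjI ballI impI)
    fix x y y' assume "x \<in> X" "y \<in> Y" "y' \<in> Y" "e (f x) y \<le> \<epsilon>/2 \<and> e (f x) y' \<le> \<epsilon>/2"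
    then show "e y y' \<le> \<epsilon>"
      using f Y.triangle[of y "f x" y'] Y.commute[of y "f x"] by (auto simp: Pi_iff)
  qed (use that in simp)
  moreover have "\<forall>x\<in>X. \<forall>\<epsilon>>0. \<exists>y\<in>Y. e (f x) y < \<epsilon>"
    using f by force
  ultimately show ?thesis
    using Y f Y.nonneg unfolding func_rel_iff G_hom_def by (simp add: Pi_iff)
qed

lemma ER_eq_G_hom_comp:
  assumes "pseudometric Y e" "f \<in> X \<rightarrow> Y" "\<forall>x\<in>X. \<forall>z\<in>Z. 0 \<le> c (g (f x)) z"
  shows "ER_eq X Z (G_hom c (g \<circ> f)) (ER_comp Y (G_hom e f) (G_hom c g))"
proof -
  interpret Y: pseudometric Y e by fact
  have "ER_comp Y (G_hom e f) (G_hom c g) x z \<le> G_hom c (g \<circ> f) x z" if "x \<in> X" "z \<in> Z" for x z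
  proof -
    have "f x \<in> Y"
      using assms(2) that(1) by auto
    then have "ER_comp Y (G_hom e f) (G_hom c g) x z \<le> max (e (f x) (f x)) (c (g (f x)) z)"
      using ER_comp_le[of "f x" Y "G_hom e f" x] Y.nonneg by (simp add: G_hom_def)
    then show ?thesis
      using \<open>f x \<in> Y\<close> assms(3) that by (simp add: G_hom_def)
  qed
  then show ?thesis
    by (rule ER_eq_if_le)
qed

lemma G_functorial: "G_is_functor u"
  unfolding G_is_functor_def
proof (intro conjI allI impI)
  fix X :: "'u set" and d assume "cMet1_obj X d"
  then show "ER_obj X d"
    by (intro ER_obj_if_pseudometric cMet1_objD)
next
  fix X :: "'u set" and d Y e f
  assume "cMet1_obj X d" and Y: "cMet1_obj Y e" and "cMet1_hom X d Y e f"
  then have "f \<in> X \<rightarrow> Y" "ER_eq X X d (\<lambda>x x'. e (f x) (f x'))"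
    by (simp_all add: cMet1_hom_iff)
  with Y show "func_rel X d Y e (G_hom e f)"
    by (intro func_rel_G_hom cMet1_objD)
next
  fix X :: "'u set" and d
  show "ER_eq X X (G_hom d id) d"
    by (rule ER_eq_if_le) (simp add: G_hom_def)
next
  fix X :: "'u set" and d Y e Z c f g
  assume "cMet1_obj X d" and Y: "cMet1_obj Y e" and Z: "cMet1_obj Z c"
    and "cMet1_hom X d Y e f" "cMet1_hom Y e Z c g"
  then have f: "f \<in> X \<rightarrow> Y" and g: "g \<in> Y \<rightarrow> Z"
    by (simp_all add: cMet1_hom_iff)
  have "\<forall>x\<in>X. \<forall>z\<in>Z. 0 \<le> c (g (f x)) z"
    using f g pseudometric.nonneg[OF cMet1_objD(3)[OF Z]] by blast
  then show "ER_eq X Z (G_hom c (g \<circ> f)) (ER_comp Y (G_hom e f) (G_hom c g))"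
    using ER_eq_G_hom_comp cMet1_objD(3)[OF Y] f by blast
qed

lemma G_hom_ER_eq_imp_eq:
  assumes "Metric_space Y e" "ER_eq X Y (G_hom e f) (G_hom e g)" "x \<in> X" "f x \<in> Y" "g x \<in> Y"
  shows "f x = g x"
proof -
  interpret Y: Metric_space Y e by fact
  have "e (g x) (f x) \<le> 0 + t" if t: "t > 0" for t
  proof -
    obtain \<delta> where "\<delta> > 0"
      and "\<And>x y. x \<in> X \<Longrightarrow> y \<in> Y \<Longrightarrow> G_hom e f x y \<le> \<delta> \<Longrightarrow> G_hom e g x y \<le> t"
      using ER_eqE[OF assms(2) t] by blast
    then show ?thesis
      using assms(3,4) by (simp add: G_hom_def)
  qed
  then have "e (g x) (f x) \<le> 0"
    by (rule field_le_epsilon)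
  then have "e (g x) (f x) = 0"
    using Y.nonneg[of "g x" "f x"] assms(4,5) by simp
  then show ?thesis
    using Y.zero assms(4,5) by simp
qed

lemma G_faithfulness: "G_faithful u"
  unfolding G_faithful_def
proof (intro allI impI ballI)
  fix X :: "'u set" and d Y e f g x
  assume "cMet1_obj X d" and Y: "cMet1_obj Y e" and "cMet1_hom X d Y e f" "cMet1_hom X d Y e g"
    and eq: "ER_eq X Y (G_hom e f) (G_hom e g)" and "x \<in> X"
  then have "f x \<in> Y" "g x \<in> Y"
    by (auto simp: cMet1_hom_iff)
  with eq \<open>x \<in> X\<close> show "f x = g x"
    by (intro G_hom_ER_eq_imp_eq[OF cMet1_objD(1)[OF Y]])
qed

section \<open>Fullness\<close>

lemma eventually_inverse_Suc_less: "0 < \<delta> \<Longrightarrow> \<exists>N. \<forall>n\<ge>N. inverse (real (Suc n)) < \<delta>"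
  using order_tendstoD(2)[OF LIMSEQ_inverse_real_of_nat] by (simp add: eventually_sequentially)

lemma func_rel_approximations_close:
  assumes F: "func_rel X R Y S F" and "\<epsilon> > 0"
  obtains \<delta> where "\<delta> > 0" "\<And>x s. x \<in> X \<Longrightarrow> (\<And>n. s n \<in> Y) \<Longrightarrow> (\<And>n. F x (s n) < inverse (Suc n)) \<Longrightarrow>
      \<exists>N. \<forall>n\<ge>N. F x (s n) \<le> \<delta> \<and> (\<forall>y\<in>Y. F x y \<le> \<delta> \<longrightarrow> S (s n) y \<le> \<epsilon>)"
proof -
  obtain \<delta> where "\<delta> > 0" and \<delta>: "\<And>x y y'. x \<in> X \<Longrightarrow> y \<in> Y \<Longrightarrow> y' \<in> Y \<Longrightarrow>
      F x y \<le> \<delta> \<Longrightarrow> F x y' \<le> \<delta> \<Longrightarrow> S y y' \<le> \<epsilon>"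
    using func_rel_single_valuedE[OF F \<open>\<epsilon> > 0\<close>] by blast
  obtain N where N: "\<forall>n\<ge>N. inverse (real (Suc n)) < \<delta>"
    using eventually_inverse_Suc_less[OF \<open>\<delta> > 0\<close>] by blast
  have "\<forall>n\<ge>N. F x (s n) \<le> \<delta> \<and> (\<forall>y\<in>Y. F x y \<le> \<delta> \<longrightarrow> S (s n) y \<le> \<epsilon>)"
    if "x \<in> X" "\<And>n. s n \<in> Y" "\<And>n. F x (s n) < inverse (Suc n)" for x s
  proof (intro allI impI)
    fix n assume "N \<le> n"
    then have "F x (s n) \<le> \<delta>"
      using N that(3)[of n] by fastforce
    then show "F x (s n) \<le> \<delta> \<and> (\<forall>y\<in>Y. F x y \<le> \<delta> \<longrightarrow> S (s n) y \<le> \<epsilon>)"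
      using \<delta>[OF \<open>x \<in> X\<close> that(2)] by blast
  qed
  with \<open>\<delta> > 0\<close> show thesis
    using that by blast
qed

lemma func_rel_approximations_MCauchy:
  assumes "Metric_space Y e" "func_rel X R Y e F" "x \<in> X"
    and s_in: "\<And>n. s n \<in> Y" and s_small: "\<And>n. F x (s n) < inverse (Suc n)"
  shows "Metric_space.MCauchy Y e s"
  unfolding Metric_space.MCauchy_def[OF assms(1)]
proof (intro conjI allI impI)
  show "range s \<subseteq> Y"
    using s_in by auto
  fix \<epsilon> :: real assume "\<epsilon> > 0"
  obtain \<delta> where "\<delta> > 0" and \<delta>: "\<And>x s. x \<in> X \<Longrightarrow> (\<And>n. s n \<in> Y) \<Longrightarrow> (\<And>n. F x (s n) < inverse (Suc n)) \<Longrightarrow>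
      \<exists>N. \<forall>n\<ge>N. F x (s n) \<le> \<delta> \<and> (\<forall>y\<in>Y. F x y \<le> \<delta> \<longrightarrow> e (s n) y \<le> \<epsilon>/2)"
    using func_rel_approximations_close[OF assms(2) half_gt_zero[OF \<open>\<epsilon> > 0\<close>]] by blast
  obtain N where N: "\<forall>n\<ge>N. F x (s n) \<le> \<delta> \<and> (\<forall>y\<in>Y. F x y \<le> \<delta> \<longrightarrow> e (s n) y \<le> \<epsilon>/2)"
    using \<delta>[OF assms(3) s_in s_small] by blast
  have "e (s n) (s n') < \<epsilon>" if "N \<le> n" "N \<le> n'" for n n'
  proof -
    have "e (s n) (s n') \<le> \<epsilon>/2"
      using N that s_in by blast
    with \<open>\<epsilon> > 0\<close> show ?thesis
      by linarith
  qed
  then show "\<exists>N. \<forall>n n'. N \<le> n \<longrightarrow> N \<le> n' \<longrightarrow> e (s n) (s n') < \<epsilon>"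
    by blast
qed

lemma func_rel_close_to_limit:
  assumes "Metric_space Y e" "func_rel X R Y e F" "\<epsilon> > 0"
  obtains \<delta> where "\<delta> > 0" "\<And>x s p y. x \<in> X \<Longrightarrow> (\<And>n. s n \<in> Y) \<Longrightarrow> (\<And>n. F x (s n) < inverse (Suc n)) \<Longrightarrow>
      limitin (Metric_space.mtopology Y e) s p sequentially \<Longrightarrow> y \<in> Y \<Longrightarrow> F x y \<le> \<delta> \<Longrightarrow> e p y \<le> \<epsilon>"
proof -
  interpret Y: Metric_space Y e by fact
  obtain \<delta> where "\<delta> > 0" and \<delta>: "\<And>x s. x \<in> X \<Longrightarrow> (\<And>n. s n \<in> Y) \<Longrightarrow> (\<And>n. F x (s n) < inverse (Suc n)) \<Longrightarrow>
      \<exists>N. \<forall>n\<ge>N. F x (s n) \<le> \<delta> \<and> (\<forall>y\<in>Y. F x y \<le> \<delta> \<longrightarrow> e (s n) y \<le> \<epsilon>/2)"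
    using func_rel_approximations_close[OF assms(2) half_gt_zero[OF assms(3)]] by blast
  have "e p y \<le> \<epsilon>"
    if x: "x \<in> X" and s: "\<And>n. s n \<in> Y" "\<And>n. F x (s n) < inverse (Suc n)"
      and lim: "limitin Y.mtopology s p sequentially" and y: "y \<in> Y" "F x y \<le> \<delta>" for x s p y
  proof -
    obtain N1 where "\<forall>n\<ge>N1. F x (s n) \<le> \<delta> \<and> (\<forall>y\<in>Y. F x y \<le> \<delta> \<longrightarrow> e (s n) y \<le> \<epsilon>/2)"
      using \<delta>[OF x s] by blast
    then have N1: "\<forall>n\<ge>N1. e (s n) y \<le> \<epsilon>/2"
      using y by blast
    have "p \<in> Y" and "\<forall>\<epsilon>>0. \<exists>N. \<forall>n\<ge>N. s n \<in> Y \<and> e (s n) p < \<epsilon>"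
      using lim by (simp_all add: Y.limit_metric_sequentially)
    then obtain N2 where N2: "\<forall>n\<ge>N2. e (s n) p < \<epsilon>/2"
      using half_gt_zero[OF assms(3)] by blast
    define n where "n = max N1 N2"
    have "e (s n) y \<le> \<epsilon>/2" "e p (s n) < \<epsilon>/2"
      using N1 N2 Y.commute[of p "s n"] by (simp_all add: n_def)
    moreover have "e p y \<le> e p (s n) + e (s n) y"
      using \<open>p \<in> Y\<close> s y by (intro Y.triangle) auto
    ultimately show ?thesis
      by linarith
  qed
  with \<open>\<delta> > 0\<close> show thesis
    using that by blast
qed

lemma func_rel_represented:
  assumes "Metric_space Y e" "Metric_space.mcomplete Y e" and F: "func_rel X R Y e F"
  obtains f where "f \<in> X \<rightarrow> Y" "ER_eq X Y F (G_hom e f)"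
proof -
  interpret Y: Metric_space Y e by fact
  have "\<forall>x\<in>X. \<forall>n. \<exists>y\<in>Y. F x y < inverse (Suc n)"
    using func_rel_totalD[OF F] by simp
  then obtain s where s_in: "\<And>x n. x \<in> X \<Longrightarrow> s x n \<in> Y"
    and s_small: "\<And>x n. x \<in> X \<Longrightarrow> F x (s x n) < inverse (Suc n)"
    by metis
  have "\<exists>p. limitin Y.mtopology (s x) p sequentially" if "x \<in> X" for x
    using func_rel_approximations_MCauchy[OF assms(1) F that s_in[OF that] s_small[OF that]] assms(2)
    unfolding Y.mcomplete_def by blast
  then obtain f where lim: "\<And>x. x \<in> X \<Longrightarrow> limitin Y.mtopology (s x) (f x) sequentially"
    by metis
  then have "f \<in> X \<rightarrow> Y"
    by (simp add: Y.limit_metric_sequentially)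
  moreover have "ER_eq X Y F (G_hom e f)"
    unfolding ER_eq_iff G_hom_def
  proof (intro allI impI)
    fix \<epsilon> :: real assume "\<epsilon> > 0"
    then obtain \<delta> where "\<delta> > 0" and \<delta>: "\<And>x s p y. x \<in> X \<Longrightarrow> (\<And>n. s n \<in> Y) \<Longrightarrow>
        (\<And>n. F x (s n) < inverse (Suc n)) \<Longrightarrow> limitin Y.mtopology s p sequentially \<Longrightarrow>
        y \<in> Y \<Longrightarrow> F x y \<le> \<delta> \<Longrightarrow> e p y \<le> \<epsilon>"
      using func_rel_close_to_limit[OF assms(1) F \<open>\<epsilon> > 0\<close>] by blast
    have "e (f x) y \<le> \<epsilon>" if "x \<in> X" "y \<in> Y" "F x y \<le> \<delta>" for x y
      using \<delta>[OF that(1) s_in[OF that(1)] s_small[OF that(1)] lim[OF that(1)] that(2,3)] .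
    with \<open>\<delta> > 0\<close> show "\<exists>\<delta>>0. \<forall>x\<in>X. \<forall>y\<in>Y. F x y \<le> \<delta> \<longrightarrow> e (f x) y \<le> \<epsilon>"
      by blast
  qed
  ultimately show thesis
    by (rule that)
qed

lemma func_rel_representative_uniformly_continuous:
  assumes "pseudometric Y e" and F: "func_rel X R Y e F" and f: "f \<in> X \<rightarrow> Y"
    and represents: "ER_eq X Y F (G_hom e f)"
  shows "ER_eq X X R (\<lambda>x x'. e (f x) (f x'))"
  unfolding ER_eq_iff
proof (intro allI impI)
  interpret Y: pseudometric Y e by fact
  fix \<epsilon> :: real assume "\<epsilon> > 0"
  then obtain \<eta> where "\<eta> > 0"
    and \<eta>: "\<And>x y. x \<in> X \<Longrightarrow> y \<in> Y \<Longrightarrow> F x y \<le> \<eta> \<Longrightarrow> G_hom e f x y \<le> \<epsilon>/2"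
    using ER_eqE[OF represents, of "\<epsilon>/2"] by auto
  obtain \<delta> where "\<delta> > 0" and \<delta>: "\<And>x x' y y'. x \<in> X \<Longrightarrow> x' \<in> X \<Longrightarrow> y \<in> Y \<Longrightarrow> y' \<in> Y \<Longrightarrow>
      F x y \<le> \<delta> \<Longrightarrow> R x x' \<le> \<delta> \<Longrightarrow> e y y' \<le> \<delta> \<Longrightarrow> F x' y' \<le> \<eta>"
    using func_rel_extensionalE[OF F \<open>\<eta> > 0\<close>] by blast
  have "e (f x) (f x') \<le> \<epsilon>" if "x \<in> X" "x' \<in> X" "R x x' \<le> \<delta>" for x x'
  proof -
    obtain y where "y \<in> Y" and y: "F x y < min \<delta> \<eta>"
      using func_rel_totalD[OF F \<open>x \<in> X\<close>, of "min \<delta> \<eta>"] \<open>\<delta> > 0\<close> \<open>\<eta> > 0\<close> by auto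
    then have "F x' y \<le> \<eta>"
      using \<delta>[of x x' y y] that \<open>\<delta> > 0\<close> by simp
    then have "e (f x) y \<le> \<epsilon>/2" "e (f x') y \<le> \<epsilon>/2"
      using \<eta> y that \<open>y \<in> Y\<close> by (auto simp: G_hom_def)
    moreover have "e (f x) (f x') \<le> e (f x) y + e y (f x')"
      using f that \<open>y \<in> Y\<close> by (intro Y.triangle) auto
    moreover have "e y (f x') = e (f x') y"
      using f that \<open>y \<in> Y\<close> by (intro Y.commute) auto
    ultimately show ?thesis
      by linarith
  qed
  with \<open>\<delta> > 0\<close> show "\<exists>\<delta>>0. \<forall>x\<in>X. \<forall>x'\<in>X. R x x' \<le> \<delta> \<longrightarrow> e (f x) (f x') \<le> \<epsilon>"
    by blast
qed

lemma G_fullness: "G_full u"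
  unfolding G_full_def
proof (intro allI impI)
  fix X :: "'u set" and d Y e F
  assume X: "cMet1_obj X d" and Y: "cMet1_obj Y e" and F: "func_rel X d Y e F"
  obtain f where f: "f \<in> X \<rightarrow> Y" "ER_eq X Y F (G_hom e f)"
    using func_rel_represented[OF cMet1_objD(1,2)[OF Y] F] by blast
  moreover have "ER_eq X X d (\<lambda>x x'. e (f x) (f x'))"
    using func_rel_representative_uniformly_continuous[OF cMet1_objD(3)[OF Y] F f] .
  ultimately show "\<exists>f. cMet1_hom X d Y e f \<and> ER_eq X Y F (G_hom e f)"
    using cMet1_hom_iff[OF X Y] by blast
qed

section \<open>Uniform pseudometrization of objects of \<open>ER(U)\<close>\<close>

definition chain_weight :: "('a \<times> nat) list \<Rightarrow> real" where
  "chain_weight cs = sum_list (map (\<lambda>(_, n). (1/2) ^ n) cs)"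

lemma chain_weight_simps [simp]:
  "chain_weight [] = 0"
  "chain_weight ((p, n) # cs) = (1/2) ^ n + chain_weight cs"
  "chain_weight (as @ bs) = chain_weight as + chain_weight bs"
  by (simp_all add: chain_weight_def)

lemma chain_weight_nonneg: "0 \<le> chain_weight cs"
  unfolding chain_weight_def by (induction cs) auto

lemma sum_list_crossing:
  fixes f :: "'a \<Rightarrow> real"
  assumes "\<forall>w\<in>set ws. 0 \<le> f w" "0 \<le> c" "c < sum_list (map f ws)"
  shows "\<exists>as w bs. ws = as @ w # bs \<and> sum_list (map f as) \<le> c \<and> c < sum_list (map f as) + f w"
  using assms
proof (induction ws arbitrary: c)
  case (Cons v ws)
  show ?case
  proof (cases "c < f v")
    case True
    then show ?thesis
      using Cons.prems by (intro exI[of _ "[]"]) auto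
  next
    case False
    with Cons.prems obtain as w bs where "ws = as @ w # bs" "sum_list (map f as) \<le> c - f v"
      "c - f v < sum_list (map f as) + f w"
      using Cons.IH[of "c - f v"] by auto
    then show ?thesis
      by (intro exI[of _ "v # as"]) auto
  qed
qed simp

lemma chain_weight_split:
  assumes "cs \<noteq> []"
  obtains as p n bs where "cs = as @ (p, n) # bs" "chain_weight as \<le> chain_weight cs / 2"
    "chain_weight bs < chain_weight cs / 2" "(1/2) ^ n \<le> chain_weight cs"
proof -
  obtain p n cs' where "cs = (p, n) # cs'"
    using assms by (metis list.exhaust surj_pair)
  then have "0 < chain_weight cs"
    using chain_weight_nonneg[of cs'] by (simp add: add_pos_nonneg)
  then obtain as w bs where cs: "cs = as @ w # bs" and as: "chain_weight as \<le> chain_weight cs / 2"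
    and w: "chain_weight cs / 2 < chain_weight as + (\<lambda>(_, n). (1/2::real) ^ n) w"
    using sum_list_crossing[of cs "\<lambda>(_, n). (1/2::real) ^ n" "chain_weight cs / 2"]
    by (force simp: chain_weight_def)
  obtain p n where w_def: "w = (p, n)"
    by fastforce
  have "chain_weight cs = chain_weight as + (1/2) ^ n + chain_weight bs"
    using cs w_def by simp
  with as w w_def chain_weight_nonneg[of as] chain_weight_nonneg[of bs] show thesis
    by (intro that[of as p n bs]) (simp_all add: cs)
qed

locale chain_metrization =
  fixes X :: "'a set" and S :: "'a \<Rightarrow> 'a \<Rightarrow> real" and r :: "nat \<Rightarrow> real"
  assumes S_self: "x \<in> X \<Longrightarrow> S x x = 0"
    and S_le_r0: "x \<in> X \<Longrightarrow> y \<in> X \<Longrightarrow> S x y \<le> r 0"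
    and r_pos: "0 < r n"
    and r_Suc_le: "r (Suc n) \<le> r n"
    and three_step: "\<lbrakk>a \<in> X; b \<in> X; c \<in> X; e \<in> X;
      S a b \<le> r (Suc m); S b c \<le> r (Suc m); S c e \<le> r (Suc m)\<rbrakk> \<Longrightarrow> S a e \<le> r m"
begin

text \<open>Steps carry their scale level \<open>n\<close>, so that the weight \<open>\<Sum> 2\<^sup>-\<^sup>n\<close> of a chain plays the role
  of Frink's sum of distances without first turning \<open>S\<close> into a distance.\<close>
fun chain :: "'a \<Rightarrow> ('a \<times> nat) list \<Rightarrow> 'a \<Rightarrow> bool" where
  "chain x [] y \<longleftrightarrow> x = y"
| "chain x ((p, n) # cs) y \<longleftrightarrow> p \<in> X \<and> S x p \<le> r n \<and> chain p cs y"

lemma chain_append: "chain x (as @ bs) y \<longleftrightarrow> (\<exists>q. chain x as q \<and> chain q bs y)"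
  by (induction x as y rule: chain.induct) auto

lemma chain_endpoint: "chain x cs y \<Longrightarrow> x \<in> X \<Longrightarrow> y \<in> X"
  by (induction x cs y rule: chain.induct) auto

lemma r_antimono: "m \<le> n \<Longrightarrow> r n \<le> r m"
  using lift_Suc_antimono_le[of r] r_Suc_le by blast

text \<open>Frink's lemma: around the crossing step of \<open>chain_weight_split\<close> both parts weigh less
  than \<open>2\<^sup>-\<^sup>m / 2\<close>, and that step has level above \<open>m\<close>, so three steps of scale \<open>r (Suc m)\<close>
  connect \<open>x\<close> to \<open>y\<close>.\<close>
lemma S_le_of_chain_weight_less:
  "x \<in> X \<Longrightarrow> chain x cs y \<Longrightarrow> chain_weight cs < (1/2) ^ m \<Longrightarrow> S x y \<le> r m"
proof (induction "length cs" arbitrary: cs x y m rule: less_induct)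
  case less
  show ?case
  proof (cases "cs = []")
    case True
    then show ?thesis
      using less.prems S_self r_pos[of m] by simp
  next
    case False
    then obtain as p n bs where cs: "cs = as @ (p, n) # bs"
      and as: "chain_weight as \<le> chain_weight cs / 2" and bs: "chain_weight bs < chain_weight cs / 2"
      and n: "(1/2) ^ n \<le> chain_weight cs"
      by (rule chain_weight_split)
    obtain q where q: "chain x as q" and "chain q ((p, n) # bs) y"
      using less.prems(2) cs by (auto simp: chain_append)
    then have "q \<in> X" "p \<in> X" "S q p \<le> r n" and p: "chain p bs y"
      using chain_endpoint less.prems(1) by auto
    have "y \<in> X"
      using chain_endpoint[OF p \<open>p \<in> X\<close>] .
    have "S x q \<le> r (Suc m)"
      using less.hyps[OF _ less.prems(1) q] cs as less.prems(3) by simp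
    moreover have "S p y \<le> r (Suc m)"
      using less.hyps[OF _ \<open>p \<in> X\<close> p] cs bs less.prems(3) by simp
    moreover have "S q p \<le> r (Suc m)"
    proof -
      have "(1/2::real) ^ n < (1/2) ^ m"
        using n less.prems(3) by linarith
      then have "Suc m \<le> n"
        by (simp add: power_strict_decreasing_iff Suc_le_eq)
      then show ?thesis
        using \<open>S q p \<le> r n\<close> r_antimono order_trans by blast
    qed
    ultimately show ?thesis
      using three_step less.prems(1) \<open>q \<in> X\<close> \<open>p \<in> X\<close> \<open>y \<in> X\<close> by blast
  qed
qed

definition chain_dist :: "'a \<Rightarrow> 'a \<Rightarrow> real" where
  "chain_dist x y = (INF cs\<in>{cs. chain x cs y}. chain_weight cs)"

lemma chain_dist_le_weight: "chain x cs y \<Longrightarrow> chain_dist x y \<le> chain_weight cs"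
  unfolding chain_dist_def
  by (rule cINF_lower) (auto intro: bdd_belowI[of _ 0] chain_weight_nonneg)

lemma chain_dist_le_step: "y \<in> X \<Longrightarrow> S x y \<le> r n \<Longrightarrow> chain_dist x y \<le> (1/2) ^ n"
  using chain_dist_le_weight[of x "[(y, n)]" y] by simp

lemma chain_dist_less_iff:
  assumes "x \<in> X" "y \<in> X"
  shows "chain_dist x y < t \<longleftrightarrow> (\<exists>cs. chain x cs y \<and> chain_weight cs < t)"
proof -
  have "chain x [(y, 0)] y"
    using assms S_le_r0 by simp
  then have "{cs. chain x cs y} \<noteq> {}"
    by blast
  then show ?thesis
    unfolding chain_dist_def
    by (subst cINF_less_iff) (auto intro: bdd_belowI[of _ 0] chain_weight_nonneg)
qed

lemma chain_dist_nonneg: "x \<in> X \<Longrightarrow> y \<in> X \<Longrightarrow> 0 \<le> chain_dist x y"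
  using chain_dist_less_iff chain_weight_nonneg by (meson not_le order.strict_trans1)

lemma chain_dist_self: "x \<in> X \<Longrightarrow> chain_dist x x = 0"
  using chain_dist_le_weight[of x "[]" x] chain_dist_nonneg[of x x] by simp

lemma chain_dist_triangle:
  assumes "x \<in> X" "y \<in> X" "z \<in> X"
  shows "chain_dist x z \<le> chain_dist x y + chain_dist y z"
proof (rule field_le_epsilon)
  fix \<epsilon> :: real assume "\<epsilon> > 0"
  then obtain cs cs' where "chain x cs y" "chain_weight cs < chain_dist x y + \<epsilon>/2"
    and "chain y cs' z" "chain_weight cs' < chain_dist y z + \<epsilon>/2"
    using chain_dist_less_iff assms by (metis half_gt_zero less_add_same_cancel1)
  moreover from this have "chain x (cs @ cs') z"
    by (auto simp: chain_append)
  ultimately show "chain_dist x z \<le> chain_dist x y + chain_dist y z + \<epsilon>"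
    using chain_dist_le_weight[of x "cs @ cs'" z] by simp
qed

lemma S_le_of_chain_dist_less:
  "x \<in> X \<Longrightarrow> y \<in> X \<Longrightarrow> chain_dist x y < (1/2) ^ m \<Longrightarrow> S x y \<le> r m"
  using chain_dist_less_iff S_le_of_chain_weight_less by blast

definition sym_chain_dist :: "'a \<Rightarrow> 'a \<Rightarrow> real" where
  "sym_chain_dist x y = (chain_dist x y + chain_dist y x) / 2"

lemma pseudometric_sym_chain_dist: "pseudometric X sym_chain_dist"
proof
  fix x y z assume "x \<in> X" "y \<in> X" "z \<in> X"
  then have "chain_dist x z \<le> chain_dist x y + chain_dist y z"
    "chain_dist z x \<le> chain_dist z y + chain_dist y x"
    using chain_dist_triangle by auto
  then show "sym_chain_dist x z \<le> sym_chain_dist x y + sym_chain_dist y z"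
    unfolding sym_chain_dist_def by (simp add: field_simps)
qed (simp_all add: sym_chain_dist_def chain_dist_self)

lemma sym_chain_dist_le_step:
  "x \<in> X \<Longrightarrow> y \<in> X \<Longrightarrow> S x y \<le> r n \<Longrightarrow> S y x \<le> r n \<Longrightarrow> sym_chain_dist x y \<le> (1/2) ^ n"
  using chain_dist_le_step[of y x n] chain_dist_le_step[of x y n] by (simp add: sym_chain_dist_def)

lemma sym_chain_dist_le_1: "x \<in> X \<Longrightarrow> y \<in> X \<Longrightarrow> sym_chain_dist x y \<le> 1"
  using sym_chain_dist_le_step[of x y 0] S_le_r0 by simp

lemma S_le_of_sym_chain_dist_less:
  assumes "x \<in> X" "y \<in> X" "sym_chain_dist x y < (1/2) ^ m / 2"
  shows "S x y \<le> r m"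
  using assms chain_dist_nonneg[of y x] S_le_of_chain_dist_less[of x y m]
  by (simp add: sym_chain_dist_def)

lemma ER_eq_S_sym_chain_dist:
  assumes "\<And>x y. x \<in> X \<Longrightarrow> y \<in> X \<Longrightarrow> S x y = S y x"
  shows "ER_eq X X S sym_chain_dist"
  unfolding ER_eq_iff
proof (intro allI impI)
  fix \<epsilon> :: real assume "\<epsilon> > 0"
  then obtain n where n: "(1/2::real) ^ n < \<epsilon>"
    using real_arch_pow_inv[of \<epsilon> "1/2"] by auto
  have "sym_chain_dist x y \<le> \<epsilon>" if "x \<in> X" "y \<in> X" "S x y \<le> r n" for x y
    using sym_chain_dist_le_step[of x y n] assms that n by simp
  then show "\<exists>\<delta>>0. \<forall>x\<in>X. \<forall>y\<in>X. S x y \<le> \<delta> \<longrightarrow> sym_chain_dist x y \<le> \<epsilon>"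
    using r_pos[of n] by blast
qed

lemma ER_eq_sym_chain_dist_S:
  assumes "\<And>n. r n \<le> (1/2) ^ n"
  shows "ER_eq X X sym_chain_dist S"
  unfolding ER_eq_iff
proof (intro allI impI)
  fix \<epsilon> :: real assume "\<epsilon> > 0"
  then obtain m where m: "(1/2::real) ^ m < \<epsilon>"
    using real_arch_pow_inv[of \<epsilon> "1/2"] by auto
  have "S x y \<le> \<epsilon>" if "x \<in> X" "y \<in> X" "sym_chain_dist x y \<le> (1/2) ^ m / 4" for x y
  proof -
    have "(0::real) < (1/2) ^ m"
      by simp
    then have "sym_chain_dist x y < (1/2) ^ m / 2"
      using that(3) by linarith
    then have "S x y \<le> r m"
      using S_le_of_sym_chain_dist_less that by blast
    then show ?thesis
      using assms[of m] m by simp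
  qed
  then show "\<exists>\<delta>>0. \<forall>x\<in>X. \<forall>y\<in>X. sym_chain_dist x y \<le> \<delta> \<longrightarrow> S x y \<le> \<epsilon>"
    by (intro exI[of _ "(1/2) ^ m / 4"]) auto
qed

end

lemma ER_obj_symmetric_three_step:
  assumes "ER_obj X R" "\<epsilon> > 0"
  shows "\<exists>\<delta>>0. \<forall>a\<in>X. \<forall>b\<in>X. \<forall>c\<in>X. \<forall>e\<in>X.
    max (R a b) (R b a) \<le> \<delta> \<and> max (R b c) (R c b) \<le> \<delta> \<and> max (R c e) (R e c) \<le> \<delta>
      \<longrightarrow> max (R a e) (R e a) \<le> \<epsilon>"
proof -
  have trans: "\<exists>\<delta>>0. \<forall>x\<in>X. \<forall>y\<in>X. \<forall>z\<in>X. R x y \<le> \<delta> \<and> R y z \<le> \<delta> \<longrightarrow> R x z \<le> \<eta>"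
    if "\<eta> > 0" for \<eta>
    using assms(1) that by (simp add: ER_obj_iff)
  obtain \<delta>\<^sub>1 where "\<delta>\<^sub>1 > 0" and \<delta>\<^sub>1: "\<forall>x\<in>X. \<forall>y\<in>X. \<forall>z\<in>X. R x y \<le> \<delta>\<^sub>1 \<and> R y z \<le> \<delta>\<^sub>1 \<longrightarrow> R x z \<le> \<epsilon>"
    using trans[OF assms(2)] by blast
  obtain \<delta>\<^sub>2 where "\<delta>\<^sub>2 > 0" and \<delta>\<^sub>2: "\<forall>x\<in>X. \<forall>y\<in>X. \<forall>z\<in>X. R x y \<le> \<delta>\<^sub>2 \<and> R y z \<le> \<delta>\<^sub>2 \<longrightarrow> R x z \<le> \<delta>\<^sub>1"
    using trans[OF \<open>\<delta>\<^sub>1 > 0\<close>] by blast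
  show ?thesis
  proof (intro exI[of _ "min \<delta>\<^sub>1 \<delta>\<^sub>2"] conjI ballI impI)
    fix a b c e assume "a \<in> X" "b \<in> X" "c \<in> X" "e \<in> X" and small:
      "max (R a b) (R b a) \<le> min \<delta>\<^sub>1 \<delta>\<^sub>2 \<and> max (R b c) (R c b) \<le> min \<delta>\<^sub>1 \<delta>\<^sub>2
        \<and> max (R c e) (R e c) \<le> min \<delta>\<^sub>1 \<delta>\<^sub>2"
    then have "R a c \<le> \<delta>\<^sub>1" "R e b \<le> \<delta>\<^sub>1"
      using \<delta>\<^sub>2 by auto
    with small \<open>a \<in> X\<close> \<open>b \<in> X\<close> \<open>c \<in> X\<close> \<open>e \<in> X\<close> show "max (R a e) (R e a) \<le> \<epsilon>"
      using \<delta>\<^sub>1 by auto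
  qed (use \<open>\<delta>\<^sub>1 > 0\<close> \<open>\<delta>\<^sub>2 > 0\<close> in simp)
qed

lemma ER_obj_chain_metrization:
  assumes "ER_obj X R"
  obtains r where "chain_metrization X (\<lambda>x y. max (R x y) (R y x)) r" "\<And>n. r n \<le> (1/2) ^ n"
proof -
  define S where "S x y = max (R x y) (R y x)" for x y
  have "\<forall>\<epsilon>. \<exists>\<delta>. \<epsilon> > 0 \<longrightarrow> \<delta> > 0 \<and> (\<forall>a\<in>X. \<forall>b\<in>X. \<forall>c\<in>X. \<forall>e\<in>X.
      S a b \<le> \<delta> \<and> S b c \<le> \<delta> \<and> S c e \<le> \<delta> \<longrightarrow> S a e \<le> \<epsilon>)"
    using ER_obj_symmetric_three_step[OF assms] unfolding S_def by blast
  then obtain modulus where modulus: "\<And>\<epsilon>. \<epsilon> > 0 \<Longrightarrow> modulus \<epsilon> > 0 \<and> (\<forall>a\<in>X. \<forall>b\<in>X. \<forall>c\<in>X. \<forall>e\<in>X.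
      S a b \<le> modulus \<epsilon> \<and> S b c \<le> modulus \<epsilon> \<and> S c e \<le> modulus \<epsilon> \<longrightarrow> S a e \<le> \<epsilon>)"
    by metis
  define r where "r = rec_nat (1::real) (\<lambda>_ \<rho>. min (modulus \<rho>) (\<rho> / 2))"
  have r_0: "r 0 = 1" and r_Suc: "r (Suc n) = min (modulus (r n)) (r n / 2)" for n
    by (simp_all add: r_def)
  have r_pos: "0 < r n" for n
    by (induction n) (simp_all add: r_0 r_Suc modulus)
  have "chain_metrization X S r"
  proof
    show "x \<in> X \<Longrightarrow> S x x = 0" "x \<in> X \<Longrightarrow> y \<in> X \<Longrightarrow> S x y \<le> r 0" for x y
      using assms by (auto simp: S_def r_0 ER_obj_iff)
    show "0 < r n" "r (Suc n) \<le> r n" for n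
      using r_pos[of n] by (auto simp: r_Suc)
    show "S a e \<le> r m" if "a \<in> X" "b \<in> X" "c \<in> X" "e \<in> X"
      "S a b \<le> r (Suc m)" "S b c \<le> r (Suc m)" "S c e \<le> r (Suc m)" for a b c e m
      using that modulus[OF r_pos[of m]] by (auto simp: r_Suc)
  qed
  moreover have "r n \<le> (1/2) ^ n" for n
    by (induction n) (auto simp: r_0 r_Suc min_le_iff_disj)
  ultimately show thesis
    using that unfolding S_def by blast
qed

lemma ER_obj_symmetrization:
  assumes "ER_obj X R"
  shows "ER_eq X X R (\<lambda>x y. max (R x y) (R y x))"
  unfolding ER_eq_iff
proof (intro allI impI)
  fix \<epsilon> :: real assume "\<epsilon> > 0"
  then obtain \<delta> where "\<delta> > 0" "\<forall>x\<in>X. \<forall>y\<in>X. R x y \<le> \<delta> \<longrightarrow> R y x \<le> \<epsilon>"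
    using assms by (auto simp: ER_obj_iff)
  with \<open>\<epsilon> > 0\<close> show "\<exists>\<delta>>0. \<forall>x\<in>X. \<forall>y\<in>X. R x y \<le> \<delta> \<longrightarrow> max (R x y) (R y x) \<le> \<epsilon>"
    by (intro exI[of _ "min \<delta> \<epsilon>"]) auto
qed

lemma ER_obj_uniformly_pseudometrizable:
  assumes "ER_obj X R"
  obtains d where "pseudometric X d" "\<forall>x\<in>X. \<forall>y\<in>X. d x y \<le> 1" "ER_eq X X R d" "ER_eq X X d R"
proof -
  define S where "S = (\<lambda>x y. max (R x y) (R y x))"
  obtain r where "chain_metrization X S r" and r_le: "\<And>n. r n \<le> (1/2) ^ n"
    using ER_obj_chain_metrization[OF assms] unfolding S_def by blast
  then interpret chain_metrization X S r
    by simp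
  have "ER_eq X X R S"
    using ER_obj_symmetrization[OF assms] by (simp add: S_def)
  moreover have "ER_eq X X S sym_chain_dist"
    by (rule ER_eq_S_sym_chain_dist) (simp add: S_def max.commute)
  moreover have "ER_eq X X sym_chain_dist S"
    using ER_eq_sym_chain_dist_S[OF r_le] .
  moreover have "ER_eq X X S R"
    by (rule ER_eq_if_le) (simp add: S_def)
  ultimately show thesis
    using that[OF pseudometric_sym_chain_dist] sym_chain_dist_le_1 ER_eq_trans by blast
qed

section \<open>Completions inside the universe\<close>

definition completion_of ::
  "'a set \<Rightarrow> ('a \<Rightarrow> 'a \<Rightarrow> real) \<Rightarrow> 'b set \<Rightarrow> ('b \<Rightarrow> 'b \<Rightarrow> real) \<Rightarrow> ('a \<Rightarrow> 'b) \<Rightarrow> bool" where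
  "completion_of X d Y e \<iota> \<longleftrightarrow> Metric_space Y e \<and> Metric_space.mcomplete Y e \<and> \<iota> \<in> X \<rightarrow> Y
     \<and> (\<forall>x\<in>X. \<forall>x'\<in>X. e (\<iota> x) (\<iota> x') = d x x') \<and> (\<forall>y\<in>Y. \<forall>\<epsilon>>0. \<exists>x\<in>X. e y (\<iota> x) < \<epsilon>)"

lemma
  assumes "completion_of X d Y e \<iota>"
  shows completion_of_Metric_space: "Metric_space Y e"
    and completion_of_mcomplete: "Metric_space.mcomplete Y e"
    and completion_of_embedding: "\<iota> \<in> X \<rightarrow> Y"
    and completion_of_isometric: "x \<in> X \<Longrightarrow> x' \<in> X \<Longrightarrow> e (\<iota> x) (\<iota> x') = d x x'"
    and completion_of_dense: "y \<in> Y \<Longrightarrow> \<epsilon> > 0 \<Longrightarrow> \<exists>x\<in>X. e y (\<iota> x) < \<epsilon>"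
  using assms by (auto simp: completion_of_def)

lemma completion_of_le:
  assumes "completion_of X d Y e \<iota>" "\<forall>x\<in>X. \<forall>x'\<in>X. d x x' \<le> B" "y \<in> Y" "y' \<in> Y"
  shows "e y y' \<le> B"
proof (rule field_le_epsilon)
  interpret Y: Metric_space Y e
    using completion_of_Metric_space[OF assms(1)] .
  fix t :: real assume "t > 0"
  then obtain x x' where "x \<in> X" "e y (\<iota> x) < t/2" "x' \<in> X" "e y' (\<iota> x') < t/2"
    using completion_of_dense[OF assms(1)] assms(3,4) half_gt_zero by metis
  moreover from this have "\<iota> x \<in> Y" "\<iota> x' \<in> Y"
    using completion_of_embedding[OF assms(1)] by auto
  then have "e y y' \<le> e y (\<iota> x) + e (\<iota> x) y'" "e (\<iota> x) y' \<le> e (\<iota> x) (\<iota> x') + e (\<iota> x') y'"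
    using assms(3,4) Y.triangle by blast+
  moreover have "e (\<iota> x') y' = e y' (\<iota> x')"
    by (rule Y.commute)
  moreover have "e (\<iota> x) (\<iota> x') \<le> B"
    using assms(2) completion_of_isometric[OF assms(1)] \<open>x \<in> X\<close> \<open>x' \<in> X\<close> by simp
  ultimately show "e y y' \<le> B + t"
    by linarith
qed

lemma mcomplete_inv_into_image:
  assumes "Metric_space C \<rho>" "Metric_space.mcomplete C \<rho>" "inj_on h C"
  defines "\<rho>' \<equiv> \<lambda>a b. \<rho> (inv_into C h a) (inv_into C h b)"
  shows "Metric_space (h ` C) \<rho>'" "Metric_space.mcomplete (h ` C) \<rho>'"
proof -
  interpret C: Metric_space C \<rho> by fact
  have inv_h: "inv_into C h (h p) = p" if "p \<in> C" for p
    using assms(3) that by simp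
  show "Metric_space (h ` C) \<rho>'"
  proof
    fix a b c assume "a \<in> h ` C" "b \<in> h ` C" "c \<in> h ` C"
    then show "(\<rho>' a b = 0) = (a = b)" "\<rho>' a c \<le> \<rho>' a b + \<rho>' b c"
      by (auto simp: \<rho>'_def inv_h C.triangle)
  qed (simp_all add: \<rho>'_def C.commute C.nonneg)
  then interpret hC: Metric_space "h ` C" \<rho>' .
  show "hC.mcomplete"
    unfolding hC.mcomplete_def
  proof (intro allI impI)
    fix \<sigma> assume "hC.MCauchy \<sigma>"
    then have \<sigma>_in: "\<sigma> n \<in> h ` C" for n
      by (auto simp: hC.MCauchy_def)
    then have "inv_into C h (\<sigma> n) \<in> C" for n
      by (simp add: inv_into_into)
    moreover have "\<forall>\<epsilon>>0. \<exists>N. \<forall>n n'. N \<le> n \<longrightarrow> N \<le> n' \<longrightarrow> \<rho>' (\<sigma> n) (\<sigma> n') < \<epsilon>"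
      using \<open>hC.MCauchy \<sigma>\<close> by (simp add: hC.MCauchy_def)
    ultimately have "C.MCauchy (inv_into C h \<circ> \<sigma>)"
      by (auto simp: C.MCauchy_def \<rho>'_def)
    then obtain p where "limitin C.mtopology (inv_into C h \<circ> \<sigma>) p sequentially"
      using assms(2) C.mcomplete_def by blast
    then have p: "p \<in> C"
      and "\<forall>\<epsilon>>0. \<exists>N. \<forall>n\<ge>N. inv_into C h (\<sigma> n) \<in> C \<and> \<rho> (inv_into C h (\<sigma> n)) p < \<epsilon>"
      by (simp_all add: C.limit_metric_sequentially)
    then have "\<forall>\<epsilon>>0. \<exists>N. \<forall>n\<ge>N. \<rho>' (\<sigma> n) (h p) < \<epsilon>"
      by (fastforce simp: \<rho>'_def inv_h)
    with p have "limitin hC.mtopology \<sigma> (h p) sequentially"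
      by (simp add: hC.limit_metric_sequentially \<sigma>_in)
    then show "\<exists>x. limitin hC.mtopology \<sigma> x sequentially"
      by blast
  qed
qed

lemma completion_of_image:
  assumes "completion_of X d C \<rho> \<Phi>" "inj_on h C"
  shows "completion_of X d (h ` C) (\<lambda>a b. \<rho> (inv_into C h a) (inv_into C h b)) (h \<circ> \<Phi>)"
proof -
  have inv_h: "inv_into C h (h p) = p" if "p \<in> C" for p
    using assms(2) that by simp
  have \<Phi>: "\<Phi> x \<in> C" if "x \<in> X" for x
    using completion_of_embedding[OF assms(1)] that by auto
  show ?thesis
    unfolding completion_of_def
    using mcomplete_inv_into_image[OF completion_of_Metric_space[OF assms(1)]
        completion_of_mcomplete[OF assms(1)] assms(2)]
      completion_of_isometric[OF assms(1)] completion_of_dense[OF assms(1)]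
    by (auto simp: \<Phi> inv_h)
qed

lemma completion_of_encodable:
  fixes X :: "'a set" and \<Phi> :: "'a \<Rightarrow> 'b" and enc :: "(nat \<Rightarrow> 'a) \<Rightarrow> 'u"
  assumes "completion_of X d C \<rho> \<Phi>" "inj enc"
  obtains h :: "'b \<Rightarrow> 'u" where "inj_on h C"
proof -
  interpret C: Metric_space C \<rho>
    using completion_of_Metric_space[OF assms(1)] .
  have "\<forall>p\<in>C. \<forall>n. \<exists>x\<in>X. \<rho> p (\<Phi> x) < inverse (Suc n)"
    using completion_of_dense[OF assms(1)] by simp
  then obtain \<sigma> where \<sigma>_in: "\<And>p n. p \<in> C \<Longrightarrow> \<sigma> p n \<in> X"
    and \<sigma>_close: "\<And>p n. p \<in> C \<Longrightarrow> \<rho> p (\<Phi> (\<sigma> p n)) < inverse (Suc n)"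
    by metis
  have lim: "limitin C.mtopology (\<lambda>n. \<Phi> (\<sigma> p n)) p sequentially" if p: "p \<in> C" for p
    unfolding C.limit_metric_sequentially
  proof (intro conjI allI impI)
    fix \<epsilon> :: real assume "\<epsilon> > 0"
    then obtain N where N: "\<forall>n\<ge>N. inverse (real (Suc n)) < \<epsilon>"
      using eventually_inverse_Suc_less by blast
    have "\<Phi> (\<sigma> p n) \<in> C \<and> \<rho> (\<Phi> (\<sigma> p n)) p < \<epsilon>" if "n \<ge> N" for n
    proof
      show "\<Phi> (\<sigma> p n) \<in> C"
        using completion_of_embedding[OF assms(1)] \<sigma>_in[OF p] by auto
      have "\<rho> p (\<Phi> (\<sigma> p n)) < inverse (real (Suc n))" "inverse (real (Suc n)) < \<epsilon>"
        using \<sigma>_close[OF p] N that by auto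
      then show "\<rho> (\<Phi> (\<sigma> p n)) p < \<epsilon>"
        using C.commute[of p "\<Phi> (\<sigma> p n)"] by linarith
    qed
    then show "\<exists>N. \<forall>n\<ge>N. \<Phi> (\<sigma> p n) \<in> C \<and> \<rho> (\<Phi> (\<sigma> p n)) p < \<epsilon>"
      by blast
  qed (rule p)
  have "inj_on \<sigma> C"
  proof (rule inj_onI)
    fix p q assume "p \<in> C" "q \<in> C" "\<sigma> p = \<sigma> q"
    then show "p = q"
      using C.limitin_metric_unique[OF lim[OF \<open>p \<in> C\<close>] _ trivial_limit_sequentially]
        lim[OF \<open>q \<in> C\<close>] by simp
  qed
  moreover have "inj_on enc (\<sigma> ` C)"
    using inj_on_subset[OF assms(2) subset_UNIV] .
  ultimately show thesis
    using that comp_inj_on by blast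
qed

lemma completion_of_closure:
  assumes "Metric_space M \<rho>" "Metric_space.mcomplete M \<rho>" "\<Phi> \<in> X \<rightarrow> M"
    "\<forall>x\<in>X. \<forall>x'\<in>X. \<rho> (\<Phi> x) (\<Phi> x') = d x x'"
  shows "completion_of X d (Metric_space.mtopology M \<rho> closure_of (\<Phi> ` X)) \<rho> \<Phi>"
proof -
  interpret M: Metric_space M \<rho> by fact
  define C where "C = M.mtopology closure_of (\<Phi> ` X)"
  have "\<Phi> ` X \<subseteq> C"
    unfolding C_def using assms(3) by (intro closure_of_subset) auto
  interpret C: Submetric M \<rho> C
    using closure_of_subset_topspace[of M.mtopology "\<Phi> ` X"] by unfold_locales (simp add: C_def)
  have "completion_of X d C \<rho> \<Phi>"
    unfolding completion_of_def
  proof (intro conjI)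
    show "Metric_space C \<rho>"
      by (rule C.sub.Metric_space_axioms)
    show "Metric_space.mcomplete C \<rho>"
      using C.closedin_mcomplete_imp_mcomplete assms(2) by (simp add: C_def)
    show "\<Phi> \<in> X \<rightarrow> C"
      using \<open>\<Phi> ` X \<subseteq> C\<close> by blast
    show "\<forall>p\<in>C. \<forall>\<epsilon>>0. \<exists>x\<in>X. \<rho> p (\<Phi> x) < \<epsilon>"
      unfolding C_def M.metric_closure_of by auto
  qed (fact assms(4))
  then show ?thesis
    by (simp add: C_def)
qed

lemma mcomplete_fspace_real:
  "Metric_space.mcomplete (Met_TC.fspace X) (Met_TC.fdist X :: ('a \<Rightarrow> real) \<Rightarrow> _)"
  using Met_TC.mcomplete_funspace[of X] complete_UNIV
  by (simp add: funspace_def Met_TC.Self_def mcomplete_of_def Metric_space.mspace_metric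
      Metric_space.mdist_metric Met_TC.Metric_space_funspace)

lemma
  assumes "pseudometric X d" "\<forall>x\<in>X. \<forall>y\<in>X. d x y \<le> B"
  shows kuratowski_embedding_fspace: "(\<lambda>x. restrict (d x) X) \<in> X \<rightarrow> Met_TC.fspace X"
    and kuratowski_embedding_isometric:
      "x \<in> X \<Longrightarrow> y \<in> X \<Longrightarrow> Met_TC.fdist X (restrict (d x) X) (restrict (d y) X) = d x y"
proof -
  interpret pseudometric X d by fact
  have "restrict (d x) X ` X \<subseteq> {0..B}" if "x \<in> X" for x
    using assms(2) nonneg that by auto
  then have "bounded (restrict (d x) X ` X)" if "x \<in> X" for x
    using that by (meson bounded_closed_interval bounded_subset)
  then show in_fspace: "(\<lambda>x. restrict (d x) X) \<in> X \<rightarrow> Met_TC.fspace X"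
    by (simp add: Met_TC.fspace_def)
  assume "x \<in> X" "y \<in> X"
  then have "X \<noteq> {}"
    by blast
  have "Met_TC.fdist X (restrict (d x) X) (restrict (d y) X) \<le> a
      \<longleftrightarrow> (\<forall>z\<in>X. \<bar>d x z - d y z\<bar> \<le> a)" for a
    using Met_TC.funspace_mdist_le[of "restrict (d x) X" X "restrict (d y) X" a] in_fspace
      \<open>x \<in> X\<close> \<open>y \<in> X\<close> \<open>X \<noteq> {}\<close>
    by (auto simp: dist_real_def)
  moreover have "\<bar>d x z - d y z\<bar> \<le> d x y" if "z \<in> X" for z
    using triangle[of x y z] triangle[of y x z] commute[of x y] \<open>x \<in> X\<close> \<open>y \<in> X\<close> that by simp
  ultimately show "Met_TC.fdist X (restrict (d x) X) (restrict (d y) X) = d x y"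
    using \<open>x \<in> X\<close> \<open>y \<in> X\<close> by (metis order_antisym order_refl self diff_zero abs_of_nonneg nonneg)
qed

lemma bounded_pseudometric_completion:
  fixes X :: "'a set"
  assumes "pseudometric X d" "\<forall>x\<in>X. \<forall>y\<in>X. d x y \<le> B"
  obtains C :: "('a \<Rightarrow> real) set" and \<rho> \<Phi> where "completion_of X d C \<rho> \<Phi>"
  using completion_of_closure[OF Met_TC.Metric_space_funspace mcomplete_fspace_real
      kuratowski_embedding_fspace[OF assms]] kuratowski_embedding_isometric[OF assms]
  by blast

lemma completion_in_universe:
  fixes X :: "'a set" and enc :: "(nat \<Rightarrow> 'a) \<Rightarrow> 'u"
  assumes "pseudometric X d" "\<forall>x\<in>X. \<forall>y\<in>X. d x y \<le> 1" "inj enc"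
  obtains Y :: "'u set" and e \<iota> where "completion_of X d Y e \<iota>" "cMet1_obj Y e"
proof -
  obtain C :: "('a \<Rightarrow> real) set" and \<rho> \<Phi> where C: "completion_of X d C \<rho> \<Phi>"
    using bounded_pseudometric_completion[OF assms(1,2)] .
  obtain h :: "('a \<Rightarrow> real) \<Rightarrow> 'u" where "inj_on h C"
    using completion_of_encodable[OF C assms(3)] .
  then have Y: "completion_of X d (h ` C) (\<lambda>a b. \<rho> (inv_into C h a) (inv_into C h b)) (h \<circ> \<Phi>)"
    by (rule completion_of_image[OF C])
  moreover have "cMet1_obj (h ` C) (\<lambda>a b. \<rho> (inv_into C h a) (inv_into C h b))"
    unfolding cMet1_obj_def
    using completion_of_Metric_space[OF Y] completion_of_mcomplete[OF Y]
      completion_of_le[OF Y assms(2)] by blast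
  ultimately show thesis
    by (rule that)
qed

section \<open>Essential surjectivity\<close>

lemma func_rel_dense_converse:
  assumes "pseudometric Y e" "\<forall>y\<in>Y. \<forall>y'\<in>Y. e y y' \<le> 1" and \<iota>: "\<iota> \<in> X \<rightarrow> Y"
    and dense: "\<forall>y\<in>Y. \<forall>\<epsilon>>0. \<exists>x\<in>X. e y (\<iota> x) < \<epsilon>"
    and R_le: "ER_eq X X R (\<lambda>x x'. e (\<iota> x) (\<iota> x'))" and le_R: "ER_eq X X (\<lambda>x x'. e (\<iota> x) (\<iota> x')) R"
  shows "func_rel Y e X R (\<lambda>y x. e y (\<iota> x))"
proof -
  interpret Y: pseudometric Y e by fact
  have "\<exists>\<delta>>0. \<forall>y\<in>Y. \<forall>y'\<in>Y. \<forall>x\<in>X. \<forall>x'\<in>X.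
          e y (\<iota> x) \<le> \<delta> \<and> e y y' \<le> \<delta> \<and> R x x' \<le> \<delta> \<longrightarrow> e y' (\<iota> x') \<le> \<epsilon>" if "\<epsilon> > 0" for \<epsilon>
  proof -
    obtain \<delta> where "\<delta> > 0"
      and \<delta>: "\<And>x x'. x \<in> X \<Longrightarrow> x' \<in> X \<Longrightarrow> R x x' \<le> \<delta> \<Longrightarrow> e (\<iota> x) (\<iota> x') \<le> \<epsilon>/3"
      using ER_eqE[OF R_le, of "\<epsilon>/3"] \<open>\<epsilon> > 0\<close> by auto
    show ?thesis
    proof (intro exI[of _ "min \<delta> (\<epsilon>/3)"] conjI ballI impI)
      fix y y' x x' assume "y \<in> Y" "y' \<in> Y" "x \<in> X" "x' \<in> X"
        and small: "e y (\<iota> x) \<le> min \<delta> (\<epsilon>/3) \<and> e y y' \<le> min \<delta> (\<epsilon>/3) \<and> R x x' \<le> min \<delta> (\<epsilon>/3)"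
      then have "\<iota> x \<in> Y" "\<iota> x' \<in> Y" "e (\<iota> x) (\<iota> x') \<le> \<epsilon>/3"
        using \<iota> \<delta> by auto
      then show "e y' (\<iota> x') \<le> \<epsilon>"
        using Y.triangle3[of y' y "\<iota> x" "\<iota> x'"] Y.commute[of y y'] small \<open>y \<in> Y\<close> \<open>y' \<in> Y\<close>
        by simp
    qed (use \<open>\<delta> > 0\<close> \<open>\<epsilon> > 0\<close> in simp)
  qed
  moreover have "\<exists>\<delta>>0. \<forall>y\<in>Y. \<forall>x\<in>X. \<forall>x'\<in>X. e y (\<iota> x) \<le> \<delta> \<and> e y (\<iota> x') \<le> \<delta> \<longrightarrow> R x x' \<le> \<epsilon>"
    if "\<epsilon> > 0" for \<epsilon>
  proof -
    obtain \<delta> where "\<delta> > 0"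
      and \<delta>: "\<And>x x'. x \<in> X \<Longrightarrow> x' \<in> X \<Longrightarrow> e (\<iota> x) (\<iota> x') \<le> \<delta> \<Longrightarrow> R x x' \<le> \<epsilon>"
      using ER_eqE[OF le_R \<open>\<epsilon> > 0\<close>] by blast
    show ?thesis
    proof (intro exI[of _ "\<delta>/2"] conjI ballI impI)
      fix y x x' assume "y \<in> Y" "x \<in> X" "x' \<in> X" and small: "e y (\<iota> x) \<le> \<delta>/2 \<and> e y (\<iota> x') \<le> \<delta>/2"
      then have "\<iota> x \<in> Y" "\<iota> x' \<in> Y"
        using \<iota> by auto
      then have "e (\<iota> x) (\<iota> x') \<le> \<delta>"
        using Y.triangle[of "\<iota> x" y "\<iota> x'"] Y.commute[of y "\<iota> x"] small \<open>y \<in> Y\<close> by simp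
      then show "R x x' \<le> \<epsilon>"
        using \<delta> \<open>x \<in> X\<close> \<open>x' \<in> X\<close> by blast
    qed (use \<open>\<delta> > 0\<close> in simp)
  qed
  ultimately show ?thesis
    using assms(2) dense \<iota> Y.nonneg unfolding func_rel_iff by (simp add: Pi_iff)
qed

lemma ER_comp_embedding_retraction:
  assumes "pseudometric Y e" "\<iota> \<in> X \<rightarrow> Y" "ER_eq X X (\<lambda>x x'. e (\<iota> x) (\<iota> x')) R"
  shows "ER_eq X X (ER_comp Y (G_hom e \<iota>) (\<lambda>y x. e y (\<iota> x))) R"
  unfolding ER_eq_iff
proof (intro allI impI)
  interpret Y: pseudometric Y e by fact
  fix \<epsilon> :: real assume "\<epsilon> > 0"
  then obtain \<delta> where "\<delta> > 0"
    and \<delta>: "\<And>x x'. x \<in> X \<Longrightarrow> x' \<in> X \<Longrightarrow> e (\<iota> x) (\<iota> x') \<le> \<delta> \<Longrightarrow> R x x' \<le> \<epsilon>"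
    using ER_eqE[OF assms(3) \<open>\<epsilon> > 0\<close>] by blast
  have "R x x' \<le> \<epsilon>" if "x \<in> X" "x' \<in> X" "ER_comp Y (G_hom e \<iota>) (\<lambda>y x. e y (\<iota> x)) x x' \<le> \<delta>/4"
    for x x'
  proof -
    have "\<iota> x \<in> Y" "\<iota> x' \<in> Y"
      using assms(2) that by auto
    then have "Y \<noteq> {}" "\<forall>y\<in>Y. 0 \<le> G_hom e \<iota> x y"
      using Y.nonneg by (auto simp: G_hom_def)
    moreover have "ER_comp Y (G_hom e \<iota>) (\<lambda>y x. e y (\<iota> x)) x x' < \<delta>/2"
      using that(3) \<open>\<delta> > 0\<close> by simp
    ultimately obtain y where "y \<in> Y" "max (G_hom e \<iota> x y) (e y (\<iota> x')) < \<delta>/2"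
      using ER_comp_less_iff[of Y "G_hom e \<iota>" x "\<lambda>y x. e y (\<iota> x)" x' "\<delta>/2"] by auto
    then have "e (\<iota> x) (\<iota> x') \<le> \<delta>"
      using Y.triangle[of "\<iota> x" y "\<iota> x'"] \<open>\<iota> x \<in> Y\<close> \<open>\<iota> x' \<in> Y\<close> by (simp add: G_hom_def)
    then show ?thesis
      using \<delta> that by blast
  qed
  with \<open>\<delta> > 0\<close> show "\<exists>\<delta>>0. \<forall>x\<in>X. \<forall>x'\<in>X.
      ER_comp Y (G_hom e \<iota>) (\<lambda>y x. e y (\<iota> x)) x x' \<le> \<delta> \<longrightarrow> R x x' \<le> \<epsilon>"
    by (intro exI[of _ "\<delta>/4"]) auto
qed

lemma ER_comp_dense_section:
  assumes "pseudometric Y e" "\<iota> \<in> X \<rightarrow> Y" "\<forall>y\<in>Y. \<forall>\<epsilon>>0. \<exists>x\<in>X. e y (\<iota> x) < \<epsilon>"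
  shows "ER_eq Y Y (ER_comp X (\<lambda>y x. e y (\<iota> x)) (G_hom e \<iota>)) e"
  unfolding ER_eq_iff
proof (intro allI impI)
  interpret Y: pseudometric Y e by fact
  fix \<epsilon> :: real assume "\<epsilon> > 0"
  have "e y y' \<le> \<epsilon>" if "y \<in> Y" "y' \<in> Y" "ER_comp X (\<lambda>y x. e y (\<iota> x)) (G_hom e \<iota>) y y' \<le> \<epsilon>/4"
    for y y'
  proof -
    have "X \<noteq> {}"
      using assms(3) \<open>y \<in> Y\<close> zero_less_one by blast
    moreover have "\<forall>x\<in>X. 0 \<le> e y (\<iota> x)"
      using Y.nonneg assms(2) \<open>y \<in> Y\<close> by auto
    moreover have "ER_comp X (\<lambda>y x. e y (\<iota> x)) (G_hom e \<iota>) y y' < \<epsilon>/2"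
      using that(3) \<open>\<epsilon> > 0\<close> by simp
    ultimately obtain x where "x \<in> X" "max (e y (\<iota> x)) (G_hom e \<iota> x y') < \<epsilon>/2"
      using ER_comp_less_iff[of X "\<lambda>y x. e y (\<iota> x)" y "G_hom e \<iota>" y' "\<epsilon>/2"] by auto
    moreover have "\<iota> x \<in> Y"
      using assms(2) \<open>x \<in> X\<close> by auto
    ultimately show ?thesis
      using Y.triangle[of y "\<iota> x" y'] that(1,2) by (simp add: G_hom_def)
  qed
  with \<open>\<epsilon> > 0\<close> show "\<exists>\<delta>>0. \<forall>y\<in>Y. \<forall>y'\<in>Y.
      ER_comp X (\<lambda>y x. e y (\<iota> x)) (G_hom e \<iota>) y y' \<le> \<delta> \<longrightarrow> e y y' \<le> \<epsilon>"
    by (intro exI[of _ "\<epsilon>/4"]) auto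
qed

lemma G_essential_surjectivity:
  fixes u :: "'u itself" and enc :: "(nat \<Rightarrow> 'u) \<Rightarrow> 'u"
  assumes "inj enc"
  shows "G_ess_surj u"
  unfolding G_ess_surj_def
proof (intro allI impI)
  fix X :: "'u set" and R assume "ER_obj X R"
  then obtain d where d: "pseudometric X d" "\<forall>x\<in>X. \<forall>y\<in>X. d x y \<le> 1"
    and R_le_d: "ER_eq X X R d" and d_le_R: "ER_eq X X d R"
    by (rule ER_obj_uniformly_pseudometrizable)
  obtain Y :: "'u set" and e \<iota> where completion: "completion_of X d Y e \<iota>" and Y: "cMet1_obj Y e"
    using completion_in_universe[OF d assms] .
  have e: "pseudometric Y e" "\<forall>y\<in>Y. \<forall>y'\<in>Y. e y y' \<le> 1"
    using cMet1_objD[OF Y] by simp_all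
  have \<iota>: "\<iota> \<in> X \<rightarrow> Y" and dense: "\<forall>y\<in>Y. \<forall>\<epsilon>>0. \<exists>x\<in>X. e y (\<iota> x) < \<epsilon>"
    using completion_of_embedding[OF completion] completion_of_dense[OF completion] by simp_all
  have R_le: "ER_eq X X R (\<lambda>x x'. e (\<iota> x) (\<iota> x'))" and le_R: "ER_eq X X (\<lambda>x x'. e (\<iota> x) (\<iota> x')) R"
    using ER_eq_cong[OF R_le_d] ER_eq_cong[OF d_le_R] completion_of_isometric[OF completion]
    by simp_all
  have "func_rel X R Y e (G_hom e \<iota>)"
    using func_rel_G_hom[OF e \<iota> R_le] .
  moreover have "func_rel Y e X R (\<lambda>y x. e y (\<iota> x))"
    using func_rel_dense_converse[OF e \<iota> dense R_le le_R] .
  moreover have "ER_eq X X (ER_comp Y (G_hom e \<iota>) (\<lambda>y x. e y (\<iota> x))) R"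
    using ER_comp_embedding_retraction[OF e(1) \<iota> le_R] .
  moreover have "ER_eq Y Y (ER_comp X (\<lambda>y x. e y (\<iota> x)) (G_hom e \<iota>)) e"
    using ER_comp_dense_section[OF e(1) \<iota> dense] .
  ultimately show "\<exists>Y e F H. cMet1_obj Y e \<and> func_rel X R Y e F \<and> func_rel Y e X R H
      \<and> ER_eq X X (ER_comp Y F H) R \<and> ER_eq Y Y (ER_comp X H F) e"
    using Y by blast
qed

theorem mainTheorem11:
  fixes u :: "'u itself"
  assumes universe: "\<exists>enc :: (nat \<Rightarrow> 'u) \<Rightarrow> 'u. inj enc"
  shows "G_equivalence u"
proof -
  obtain enc :: "(nat \<Rightarrow> 'u) \<Rightarrow> 'u" where "inj enc"
    using universe by blast
  then show ?thesis
    unfolding G_equivalence_def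
    using G_functorial G_fullness G_faithfulness G_essential_surjectivity by blast
qed

end
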